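(* Let $G$ be a connected diamond-free graph in which every induced $P_4$ is settled. Then either $G$ is complete bipartite, or every edge $uv\in E(G)$ such that $\{u,v\}$ is a maximal clique of $G$ is a simplicial clique of $G$.
   Context: An induced $P_4$ $(a,b,c,d)$ (path $a-b-c-d$, induced) is settled if $G$ has a vertex adjacent to both $b$ and $c$ and non-adjacent to both $a$ and $d$. A vertex $v$ is simplicial if $N[v]$ is a clique; a clique is simplicial if it equals $N[v]$ for some simplicial vertex $v$. The diamond is $K_4$ minus one edge; diamond-free means no induced diamond. *)

theory Defs
  imports Main
begin

definition simple_graph :: "'a set \<Rightarrow> ('a \<Rightarrow> 'a \<Rightarrow> bool) \<Rightarrow> bool" where
  "simple_graph V E \<longleftrightarrow> finite V \<and> (\<forall>x y. E x y \<longrightarrow> x \<in> V \<and> y \<in> V) \<and>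
     (\<forall>x y. E x y \<longrightarrow> E y x) \<and> (\<forall>x. \<not> E x x)"

definition connected_graph :: "'a set \<Rightarrow> ('a \<Rightarrow> 'a \<Rightarrow> bool) \<Rightarrow> bool" where
  "connected_graph V E \<longleftrightarrow> (\<forall>x\<in>V. \<forall>y\<in>V. E\<^sup>*\<^sup>* x y)"

definition induced_P4 :: "'a set \<Rightarrow> ('a \<Rightarrow> 'a \<Rightarrow> bool) \<Rightarrow> 'a \<Rightarrow> 'a \<Rightarrow> 'a \<Rightarrow> 'a \<Rightarrow> bool" where
  "induced_P4 V E a b c d \<longleftrightarrow> a \<in> V \<and> b \<in> V \<and> c \<in> V \<and> d \<in> V \<and>
     distinct [a, b, c, d] \<and> E a b \<and> E b c \<and> E c d \<and> \<not> E a c \<and> \<not> E a d \<and> \<not> E b d"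

definition settled :: "'a set \<Rightarrow> ('a \<Rightarrow> 'a \<Rightarrow> bool) \<Rightarrow> 'a \<Rightarrow> 'a \<Rightarrow> 'a \<Rightarrow> 'a \<Rightarrow> bool" where
  "settled V E a b c d \<longleftrightarrow> (\<exists>v\<in>V. E v b \<and> E v c \<and> \<not> E v a \<and> \<not> E v d)"

definition diamond_free :: "'a set \<Rightarrow> ('a \<Rightarrow> 'a \<Rightarrow> bool) \<Rightarrow> bool" where
  "diamond_free V E \<longleftrightarrow> \<not> (\<exists>a\<in>V. \<exists>b\<in>V. \<exists>c\<in>V. \<exists>d\<in>V. distinct [a, b, c, d] \<and>
     E a b \<and> E a c \<and> E b c \<and> E b d \<and> E c d \<and> \<not> E a d)"

definition complete_bipartite :: "'a set \<Rightarrow> ('a \<Rightarrow> 'a \<Rightarrow> bool) \<Rightarrow> bool" where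
  "complete_bipartite V E \<longleftrightarrow> (\<exists>A B. A \<union> B = V \<and> A \<inter> B = {} \<and> A \<noteq> {} \<and> B \<noteq> {} \<and>
     (\<forall>x\<in>V. \<forall>y\<in>V. E x y \<longleftrightarrow> (x \<in> A \<and> y \<in> B) \<or> (x \<in> B \<and> y \<in> A)))"

definition is_clique :: "'a set \<Rightarrow> ('a \<Rightarrow> 'a \<Rightarrow> bool) \<Rightarrow> 'a set \<Rightarrow> bool" where
  "is_clique V E K \<longleftrightarrow> K \<subseteq> V \<and> (\<forall>x\<in>K. \<forall>y\<in>K. x \<noteq> y \<longrightarrow> E x y)"

definition maximal_clique :: "'a set \<Rightarrow> ('a \<Rightarrow> 'a \<Rightarrow> bool) \<Rightarrow> 'a set \<Rightarrow> bool" where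
  "maximal_clique V E K \<longleftrightarrow> is_clique V E K \<and> (\<forall>K'. is_clique V E K' \<and> K \<subseteq> K' \<longrightarrow> K' = K)"

definition closed_nbhd :: "('a \<Rightarrow> 'a \<Rightarrow> bool) \<Rightarrow> 'a \<Rightarrow> 'a set" where
  "closed_nbhd E v = insert v {u. E v u}"

definition simplicial_vertex :: "'a set \<Rightarrow> ('a \<Rightarrow> 'a \<Rightarrow> bool) \<Rightarrow> 'a \<Rightarrow> bool" where
  "simplicial_vertex V E v \<longleftrightarrow> v \<in> V \<and> is_clique V E (closed_nbhd E v)"

definition simplicial_clique :: "'a set \<Rightarrow> ('a \<Rightarrow> 'a \<Rightarrow> bool) \<Rightarrow> 'a set \<Rightarrow> bool" where
  "simplicial_clique V E K \<longleftrightarrow> is_clique V E K \<and>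
     (\<exists>v. simplicial_vertex V E v \<and> K = closed_nbhd E v)"

end

theory Submission
  imports Defs
begin

text \<open>Let \<open>uv\<close> be an edge in no triangle, which is what it means for \<open>{u, v}\<close> to be a maximal
  clique. If \<open>{u, v}\<close> is not simplicial, both \<open>u\<close> and \<open>v\<close> have further neighbours. An induced
  \<open>P\<^sub>4\<close> \<open>x-u-v-y\<close> could only be settled by a common neighbour of \<open>u\<close> and \<open>v\<close>, so every neighbour of
  \<open>u\<close> is adjacent to every neighbour of \<open>v\<close>. Diamond-freeness then makes \<open>N(u)\<close> and \<open>N(v)\<close>
  independent, and settling \<open>w-z-u-v\<close> shows that every neighbour of \<open>N(u)\<close> lies in \<open>N(u) \<union> N(v)\<close>.
  By connectivity \<open>V = N(u) \<union> N(v)\<close>, a complete bipartition.\<close>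

lemma maximal_clique_edge_no_common_neighbour:
  assumes "simple_graph V E" and "E u v" and "maximal_clique V E {u, v}"
    and "E u w" and "E v w"
  shows False
proof -
  have "is_clique V E {u, v, w}"
    using assms unfolding simple_graph_def is_clique_def by auto
  then have "{u, v, w} = {u, v}"
    using assms(3) unfolding maximal_clique_def by blast
  then show False
    using assms unfolding simple_graph_def by auto
qed

lemma pendant_edge_simplicial_clique:
  assumes "simple_graph V E" and "E u v" and "\<And>x. E u x \<Longrightarrow> x = v"
  shows "simplicial_clique V E {u, v}"
proof -
  have nbhd: "closed_nbhd E u = {u, v}"
    using assms(2,3) unfolding closed_nbhd_def by blast
  have "is_clique V E {u, v}"
    using assms(1,2) unfolding simple_graph_def is_clique_def by auto
  moreover have "u \<in> V"
    using assms(1,2) unfolding simple_graph_def by blast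
  ultimately show ?thesis
    using nbhd unfolding simplicial_clique_def simplicial_vertex_def by metis
qed

locale settled_diamond_free_graph =
  fixes V :: "'a set" and E :: "'a \<Rightarrow> 'a \<Rightarrow> bool"
  assumes simple: "simple_graph V E"
    and diamond_free: "diamond_free V E"
    and P4_settled: "\<And>a b c d. induced_P4 V E a b c d \<Longrightarrow> settled V E a b c d"
begin

lemma sym: "E x y \<Longrightarrow> E y x"
  using simple unfolding simple_graph_def by blast

lemma irrefl: "\<not> E x x"
  using simple unfolding simple_graph_def by blast

lemma adjacent_in_V: "E x y \<Longrightarrow> x \<in> V" "E x y \<Longrightarrow> y \<in> V"
  using simple unfolding simple_graph_def by blast+

context
  fixes u v
  assumes uv: "E u v"
    and no_common_neighbour: "\<And>w. \<not> (E u w \<and> E v w)"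
begin

lemma neighbours_adjacent:
  assumes ux: "E u x" and vy: "E v y"
  shows "E x y"
proof (rule ccontr)
  assume xy: "\<not> E x y"
  have "\<not> E x v" "\<not> E u y"
    using no_common_neighbour ux vy sym by blast+
  moreover have "distinct [x, u, v, y]"
    using uv ux vy xy irrefl sym \<open>\<not> E x v\<close> \<open>\<not> E u y\<close> by auto
  ultimately have "induced_P4 V E x u v y"
    unfolding induced_P4_def using uv ux vy xy sym adjacent_in_V by blast
  then obtain w where "E w u" "E w v"
    using P4_settled unfolding settled_def by blast
  then show False
    using no_common_neighbour sym by blast
qed

lemma neighbourhood_independent:
  assumes vy: "E v y" "y \<noteq> u" and ux: "E u x" and ux': "E u x'"
  shows "\<not> E x x'"
proof
  assume xx': "E x x'"
  have xy: "E x y" "E x' y"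
    using neighbours_adjacent ux ux' vy by blast+
  have uy: "\<not> E u y"
    using no_common_neighbour vy by blast
  have "distinct [u, x, x', y]"
    using ux ux' xx' xy vy(2) irrefl by auto
  \<comment> \<open>\<open>u, x, x', y\<close> would be a diamond with missing edge \<open>uy\<close>\<close>
  then show False
    using diamond_free ux ux' xx' xy uy adjacent_in_V
    unfolding diamond_free_def by blast
qed

lemma neighbour_of_neighbour:
  assumes vy: "E v y" "y \<noteq> u" and uz: "E u z" and zw: "E z w"
  shows "E u w \<or> E v w"
proof (rule ccontr)
  assume w: "\<not> (E u w \<or> E v w)"
  have "\<not> E z v"
    using no_common_neighbour uz sym by blast
  moreover have "distinct [w, z, u, v]"
    using uv uz zw w irrefl sym \<open>\<not> E z v\<close> by auto
  ultimately have "induced_P4 V E w z u v"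
    unfolding induced_P4_def using uv uz zw w sym adjacent_in_V by blast
  then obtain t where "E t z" "E t u"
    using P4_settled unfolding settled_def by blast
  then show False
    using neighbourhood_independent[OF vy sym[of t u] uz] by blast
qed

end

lemma complete_bipartite_by_edge:
  assumes connected: "connected_graph V E"
    and uv: "E u v" and no_common_neighbour: "\<And>w. \<not> (E u w \<and> E v w)"
    and ux: "E u x" "x \<noteq> v" and vy: "E v y" "y \<noteq> u"
  shows "complete_bipartite V E"
proof -
  define A where "A = {w. E u w}"
  define B where "B = {w. E v w}"
  have vu: "E v u" and no_common_neighbour': "\<And>w. \<not> (E v w \<and> E u w)"
    using sym[OF uv] no_common_neighbour by blast+
  have "w \<in> A \<union> B" if "E\<^sup>*\<^sup>* u w" for w
    using that
  proof (induction rule: rtranclp_induct)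
    case base
    then show ?case using vu B_def by simp
  next
    case (step z w)
    then show ?case
      using neighbour_of_neighbour[OF uv no_common_neighbour vy]
        neighbour_of_neighbour[OF vu no_common_neighbour' ux]
      unfolding A_def B_def by blast
  qed
  then have cover: "A \<union> B = V"
    using connected adjacent_in_V[OF uv] adjacent_in_V
    unfolding connected_graph_def A_def B_def by blast
  have disjoint: "A \<inter> B = {}"
    using no_common_neighbour unfolding A_def B_def by blast
  have "E a b \<longleftrightarrow> (a \<in> A \<and> b \<in> B) \<or> (a \<in> B \<and> b \<in> A)" if "a \<in> V" "b \<in> V" for a b
    using that cover disjoint sym
      neighbours_adjacent[OF uv no_common_neighbour]
      neighbourhood_independent[OF uv no_common_neighbour vy]
      neighbourhood_independent[OF vu no_common_neighbour' ux]
    unfolding A_def B_def by blast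
  moreover have "v \<in> A" "u \<in> B"
    using uv vu unfolding A_def B_def by simp_all
  ultimately show ?thesis
    unfolding complete_bipartite_def using cover disjoint by blast
qed

end

theorem lemma5:
  fixes V :: "'a set" and E :: "'a \<Rightarrow> 'a \<Rightarrow> bool"
  assumes "simple_graph V E"
    and "connected_graph V E"
    and "diamond_free V E"
    and "\<forall>a b c d. induced_P4 V E a b c d \<longrightarrow> settled V E a b c d"
  shows "complete_bipartite V E \<or>
    (\<forall>u v. E u v \<and> maximal_clique V E {u, v} \<longrightarrow> simplicial_clique V E {u, v})"
proof (rule disjCI)
  interpret settled_diamond_free_graph V E
    using assms(1,3,4) by unfold_locales blast+
  assume "\<not> (\<forall>u v. E u v \<and> maximal_clique V E {u, v} \<longrightarrow> simplicial_clique V E {u, v})"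
  then obtain u v where uv: "E u v" and max: "maximal_clique V E {u, v}"
    and not_simplicial: "\<not> simplicial_clique V E {u, v}" by blast
  have no_common_neighbour: "\<And>w. \<not> (E u w \<and> E v w)"
    using maximal_clique_edge_no_common_neighbour[OF assms(1) uv max] by blast
  obtain x where "E u x" "x \<noteq> v"
    using pendant_edge_simplicial_clique[OF assms(1) uv] not_simplicial by blast
  moreover obtain y where "E v y" "y \<noteq> u"
    using pendant_edge_simplicial_clique[OF assms(1) sym[OF uv]] not_simplicial
    by (metis insert_commute)
  ultimately show "complete_bipartite V E"
    using complete_bipartite_by_edge[OF assms(2) uv no_common_neighbour] by blast
qed

end
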